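(* Let $d\ge 1$ and $1\le p<q<\infty$. Then the Morrey space $\mathcal{M}^p_q(\mathbb{R}^d)$ satisfies $$C_{\rm NJ}(\mathcal{M}^p_q)=C_{\rm J}(\mathcal{M}^p_q)=2\quad\text{and}\quad C_{\rm DW}(\mathcal{M}^p_q)=4.$$
   Context: For $1\le p\le q<\infty$, the Morrey space $\mathcal{M}^p_q=\mathcal{M}^p_q(\mathbb{R}^d)$ is the Banach space of all measurable functions $f$ on $\mathbb{R}^d$ with $$\|f\|_{\mathcal{M}^p_q}:=\sup_{B=B(a,r)}|B|^{\frac1q-\frac1p}\Big(\int_B|f(y)|^p\,dy\Big)^{1/p}<\infty,$$ the supremum taken over all Euclidean balls $B(a,r)$ with center $a\in\mathbb{R}^d$ and radius $r>0$, and $|B|$ the Lebesgue measure of $B$ (functions equal a.e. identified). For a Banach space $X$: the von Neumann–Jordan constant is $C_{\rm NJ}(X):=\sup\Big\{\frac{\|x+y\|_X^2+\|x-y\|_X^2}{2(\|x\|_X^2+\|y\|_X^2)}: x,y\in X\setminus\{0\}\Big\}$; the James constant is $C_{\rm J}(X):=\sup\{\min\{\|x+y\|_X,\|x-y\|_X\}: x,y\in X,\ \|x\|_X=\|y\|_X=1\}$; the Dunkl–Williams constant is $C_{\rm DW}(X):=\sup\Big\{\frac{\|x\|_X+\|y\|_X}{\|x-y\|_X}\Big\|\frac{x}{\|x\|_X}-\frac{y}{\|y\|_X}\Big\|_X: x,y\in X,\ x\neq0,\ y\neq0,\ x\neq y\Big\}$. *)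

theory Defs
  imports "HOL-Analysis.Analysis"
begin

text \<open>Morrey space on a Euclidean space 'a (of dimension d = DIM('a) \<ge> 1),
  real-valued functions, Lebesgue measure.\<close>

definition morrey_local_int :: "real \<Rightarrow> ('a::euclidean_space \<Rightarrow> real) \<Rightarrow> 'a \<Rightarrow> real \<Rightarrow> ennreal" where
  "morrey_local_int p f a r = (\<integral>\<^sup>+ y\<in>ball a r. ennreal (\<bar>f y\<bar> powr p) \<partial>lebesgue)"

definition morrey_local :: "real \<Rightarrow> real \<Rightarrow> ('a::euclidean_space \<Rightarrow> real) \<Rightarrow> 'a \<Rightarrow> real \<Rightarrow> real" where
  "morrey_local p q f a r =
     measure lebesgue (ball a r) powr (1/q - 1/p) * enn2real (morrey_local_int p f a r) powr (1/p)"

definition in_morrey :: "real \<Rightarrow> real \<Rightarrow> ('a::euclidean_space \<Rightarrow> real) \<Rightarrow> bool" where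
  "in_morrey p q f \<longleftrightarrow> f \<in> borel_measurable lebesgue
     \<and> (\<forall>a r. r > 0 \<longrightarrow> morrey_local_int p f a r < \<infinity>)
     \<and> bdd_above {morrey_local p q f a r | a r. r > 0}"

definition morrey_norm :: "real \<Rightarrow> real \<Rightarrow> ('a::euclidean_space \<Rightarrow> real) \<Rightarrow> real" where
  "morrey_norm p q f = Sup {morrey_local p q f a r | a r. r > 0}"

text \<open>Geometric constants of the Banach space (Morrey space). The zero element of the
  space (class of a.e.-zero functions) is exactly the functions with norm 0.\<close>

definition morrey_C_NJ :: "real \<Rightarrow> real \<Rightarrow> ('a::euclidean_space \<Rightarrow> real) itself \<Rightarrow> real" where
  "morrey_C_NJ p q _ = Sup {((morrey_norm p q (\<lambda>t. f t + g t))\<^sup>2 + (morrey_norm p q (\<lambda>t. f t - g t))\<^sup>2)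
       / (2 * ((morrey_norm p q f)\<^sup>2 + (morrey_norm p q g)\<^sup>2))
     | f g :: 'a \<Rightarrow> real. in_morrey p q f \<and> in_morrey p q g
         \<and> morrey_norm p q f \<noteq> 0 \<and> morrey_norm p q g \<noteq> 0}"

definition morrey_C_J :: "real \<Rightarrow> real \<Rightarrow> ('a::euclidean_space \<Rightarrow> real) itself \<Rightarrow> real" where
  "morrey_C_J p q _ = Sup {min (morrey_norm p q (\<lambda>t. f t + g t)) (morrey_norm p q (\<lambda>t. f t - g t))
     | f g :: 'a \<Rightarrow> real. in_morrey p q f \<and> in_morrey p q g
         \<and> morrey_norm p q f = 1 \<and> morrey_norm p q g = 1}"

definition morrey_C_DW :: "real \<Rightarrow> real \<Rightarrow> ('a::euclidean_space \<Rightarrow> real) itself \<Rightarrow> real" where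
  "morrey_C_DW p q _ = Sup {(morrey_norm p q f + morrey_norm p q g) / morrey_norm p q (\<lambda>t. f t - g t)
       * morrey_norm p q (\<lambda>t. f t / morrey_norm p q f - g t / morrey_norm p q g)
     | f g :: 'a \<Rightarrow> real. in_morrey p q f \<and> in_morrey p q g
         \<and> morrey_norm p q f \<noteq> 0 \<and> morrey_norm p q g \<noteq> 0
         \<and> morrey_norm p q (\<lambda>t. f t - g t) \<noteq> 0}"

end

theory Submission
  imports Defs
begin

text \<open>
  The upper bounds hold in every normed space: the triangle inequality and homogeneity give
  \<open>C_NJ \<le> 2\<close> and \<open>C_J \<le> 2\<close>, and
  \<open>\<parallel>x/\<parallel>x\<parallel> - y/\<parallel>y\<parallel>\<parallel> \<le> 2\<parallel>x - y\<parallel> / max \<parallel>x\<parallel> \<parallel>y\<parallel>\<close> gives \<open>C_DW \<le> 4\<close>;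
  for the Morrey norm the triangle inequality comes from Minkowski's inequality on each ball.
  For the lower bounds, the indicators of two unit balls placed far apart span an isometric
  copy of \<open>\<ell>\<^sup>\<infinity>\<close> in two dimensions: a ball meeting one bump only sees that bump's norm, while a
  ball meeting both is so large that the factor \<open>|B| powr (1/q - 1/p)\<close>, which decays because
  \<open>p < q\<close>, outweighs the doubled mass. In \<open>\<ell>\<^sup>\<infinity>\<close> the pairs \<open>(1,1), (1,-1)\<close> and
  \<open>(1, 2s - 1), (s, s)\<close> with \<open>s \<rightarrow> 1\<close> show that the three constants reach \<open>2\<close>, \<open>2\<close> and \<open>4\<close>.
\<close>

section \<open>Minkowski's inequality\<close>

lemma powr_convex_combination:
  fixes t u v p :: real
  assumes p: "1 \<le> p" and t: "0 \<le> t" "t \<le> 1" and uv: "0 \<le> u" "0 \<le> v"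
  shows "(t * u + (1 - t) * v) powr p \<le> t * u powr p + (1 - t) * v powr p"
proof -
  have weight: "(s * x) powr p \<le> s * x powr p" if "0 \<le> s" "s \<le> 1" "0 \<le> x" for s x :: real
  proof (cases "s = 0")
    case False
    then have "s powr p \<le> s" using that p by (intro powr_le_one_le) auto
    then show ?thesis using that by (simp add: powr_mult mult_right_mono)
  qed simp
  consider "u = 0" | "v = 0" | "0 < u" "0 < v" using uv by linarith
  then show ?thesis
  proof cases
    case 1
    then show ?thesis using weight[of "1 - t" v] t uv p by simp
  next
    case 2
    then show ?thesis using weight[of t u] t uv p by simp
  next
    case 3
    then show ?thesis
      using convex_onD[OF powr_convex[OF p], of t v u] t by (simp add: algebra_simps)
  qed
qed

lemma powr_add_le_weighted:
  fixes x y a b p :: real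
  assumes p: "1 \<le> p" and xy: "0 \<le> x" "0 \<le> y" and ab: "0 < a" "0 < b"
  shows "(x + y) powr p \<le> (a + b) powr (p - 1) * (x powr p / a powr (p - 1) + y powr p / b powr (p - 1))"
proof -
  define t where "t = a / (a + b)"
  have t: "0 \<le> t" "t \<le> 1" "1 - t = b / (a + b)" using ab by (auto simp: t_def field_simps)
  have powr_split: "c powr p = c * c powr (p - 1)" if "0 < c" for c :: real
    using that by (simp add: powr_mult_base)
  have "t * (x / a) = x / (a + b)" "(1 - t) * (y / b) = y / (a + b)"
    using ab by (simp_all only: t(3)) (simp_all add: t_def)
  then have "t * (x / a) + (1 - t) * (y / b) = (x + y) / (a + b)"
    by (simp add: add_divide_distrib)
  then have "x + y = (a + b) * (t * (x / a) + (1 - t) * (y / b))"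
    using ab by simp
  then have "(x + y) powr p = (a + b) powr p * (t * (x / a) + (1 - t) * (y / b)) powr p"
    using xy ab t by (simp add: powr_mult)
  also have "\<dots> \<le> (a + b) powr p * (t * (x / a) powr p + (1 - t) * (y / b) powr p)"
    using powr_convex_combination[OF p t(1,2), of "x / a" "y / b"] xy ab
    by (intro mult_left_mono) auto
  also have "t * (x / a) powr p = x powr p / a powr (p - 1) / (a + b)"
    using xy ab by (simp add: t_def powr_divide powr_split[of a])
  also have "(1 - t) * (y / b) powr p = y powr p / b powr (p - 1) / (a + b)"
    using xy ab by (simp add: t(3) powr_divide powr_split[of b])
  also have "(a + b) powr p * (x powr p / a powr (p - 1) / (a + b) + y powr p / b powr (p - 1) / (a + b))
      = (a + b) powr (p - 1) * (x powr p / a powr (p - 1) + y powr p / b powr (p - 1))"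
  proof -
    have "(a + b) * (X / (a + b) + Y / (a + b)) = X + Y" for X Y
      using ab by (simp add: add_divide_distrib[symmetric])
    moreover have "(a + b) powr p = (a + b) * (a + b) powr (p - 1)" using ab by (intro powr_split) simp
    ultimately show ?thesis by (simp only: mult.assoc mult.left_commute[of "a + b"])
  qed
  finally show ?thesis .
qed

lemma nn_integral_powr_add_le:
  fixes f g :: "'a \<Rightarrow> real"
  assumes p: "1 \<le> p" and [measurable]: "f \<in> borel_measurable M" "g \<in> borel_measurable M"
    and ab: "0 < a" "0 < b"
    and f_le: "(\<integral>\<^sup>+x. ennreal (\<bar>f x\<bar> powr p) \<partial>M) \<le> ennreal (a powr p)"
    and g_le: "(\<integral>\<^sup>+x. ennreal (\<bar>g x\<bar> powr p) \<partial>M) \<le> ennreal (b powr p)"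
  shows "(\<integral>\<^sup>+x. ennreal (\<bar>f x + g x\<bar> powr p) \<partial>M) \<le> ennreal ((a + b) powr p)"
proof -
  define K where "K = (a + b) powr (p - 1)"
  define Ka Kb where "Ka = K / a powr (p - 1)" and "Kb = K / b powr (p - 1)"
  have K: "0 \<le> Ka" "0 \<le> Kb" by (simp_all add: Ka_def Kb_def K_def)
  have "(\<integral>\<^sup>+x. ennreal (\<bar>f x + g x\<bar> powr p) \<partial>M)
      \<le> (\<integral>\<^sup>+x. ennreal Ka * ennreal (\<bar>f x\<bar> powr p) + ennreal Kb * ennreal (\<bar>g x\<bar> powr p) \<partial>M)"
  proof (intro nn_integral_mono)
    fix x
    have "\<bar>f x + g x\<bar> powr p \<le> (\<bar>f x\<bar> + \<bar>g x\<bar>) powr p"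
      using p by (intro powr_mono2) auto
    also have "\<dots> \<le> Ka * \<bar>f x\<bar> powr p + Kb * \<bar>g x\<bar> powr p"
      using powr_add_le_weighted[OF p _ _ ab, of "\<bar>f x\<bar>" "\<bar>g x\<bar>"]
      by (simp add: Ka_def Kb_def K_def field_simps)
    finally show "ennreal (\<bar>f x + g x\<bar> powr p)
        \<le> ennreal Ka * ennreal (\<bar>f x\<bar> powr p) + ennreal Kb * ennreal (\<bar>g x\<bar> powr p)"
      using K by (simp add: ennreal_mult'[symmetric] ennreal_plus[symmetric] del: ennreal_plus)
  qed
  also have "\<dots> \<le> ennreal Ka * ennreal (a powr p) + ennreal Kb * ennreal (b powr p)"
    using f_le g_le by (simp add: nn_integral_add nn_integral_cmult add_mono mult_left_mono)
  also have "\<dots> = ennreal (Ka * a powr p + Kb * b powr p)"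
    using K by (simp add: ennreal_mult'[symmetric] ennreal_plus[symmetric] del: ennreal_plus)
  also have "Ka * a powr p + Kb * b powr p = K * (a + b)"
  proof -
    have "a powr p = a * a powr (p - 1)" "b powr p = b * b powr (p - 1)"
      using ab by (simp_all add: powr_mult_base)
    then show ?thesis by (simp add: Ka_def Kb_def distrib_left)
  qed
  also have "K * (a + b) = (a + b) powr p"
    using ab by (simp add: K_def powr_mult_base mult.commute)
  finally show ?thesis .
qed

lemma Minkowski_nn_integral_powr:
  fixes f g :: "'a \<Rightarrow> real"
  assumes p: "1 \<le> p" and f: "f \<in> borel_measurable M" and g: "g \<in> borel_measurable M"
    and f_fin: "(\<integral>\<^sup>+x. ennreal (\<bar>f x\<bar> powr p) \<partial>M) < \<infinity>"
    and g_fin: "(\<integral>\<^sup>+x. ennreal (\<bar>g x\<bar> powr p) \<partial>M) < \<infinity>"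
  shows "(\<integral>\<^sup>+x. ennreal (\<bar>f x + g x\<bar> powr p) \<partial>M) < \<infinity>"
    and "enn2real (\<integral>\<^sup>+x. ennreal (\<bar>f x + g x\<bar> powr p) \<partial>M) powr (1/p)
      \<le> enn2real (\<integral>\<^sup>+x. ennreal (\<bar>f x\<bar> powr p) \<partial>M) powr (1/p)
       + enn2real (\<integral>\<^sup>+x. ennreal (\<bar>g x\<bar> powr p) \<partial>M) powr (1/p)"
proof -
  define J where "J = (\<integral>\<^sup>+x. ennreal (\<bar>f x + g x\<bar> powr p) \<partial>M)"
  define A where "A = enn2real (\<integral>\<^sup>+x. ennreal (\<bar>f x\<bar> powr p) \<partial>M) powr (1/p)"
  define B where "B = enn2real (\<integral>\<^sup>+x. ennreal (\<bar>g x\<bar> powr p) \<partial>M) powr (1/p)"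
  have AB: "0 \<le> A" "0 \<le> B" unfolding A_def B_def by auto
  have A: "(\<integral>\<^sup>+x. ennreal (\<bar>f x\<bar> powr p) \<partial>M) = ennreal (A powr p)"
    using f_fin p by (simp add: A_def powr_powr ennreal_enn2real_if)
  have B: "(\<integral>\<^sup>+x. ennreal (\<bar>g x\<bar> powr p) \<partial>M) = ennreal (B powr p)"
    using g_fin p by (simp add: B_def powr_powr ennreal_enn2real_if)
  \<comment> \<open>the weights \<open>A + \<delta>\<close>, \<open>B + \<delta>\<close> avoid a case distinction on vanishing norms\<close>
  have J_le: "J \<le> ennreal ((A + B + 2 * \<delta>) powr p)" if "0 < \<delta>" for \<delta>
  proof -
    have "A powr p \<le> (A + \<delta>) powr p" "B powr p \<le> (B + \<delta>) powr p"
      using AB that p by (auto intro!: powr_mono2)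
    then show ?thesis
      using nn_integral_powr_add_le[OF p f g, of "A + \<delta>" "B + \<delta>"] AB that
      by (simp add: J_def A B add_ac)
  qed
  show "(\<integral>\<^sup>+x. ennreal (\<bar>f x + g x\<bar> powr p) \<partial>M) < \<infinity>"
    using J_le[of 1] by (simp add: J_def le_less_trans)
  have "enn2real J powr (1/p) \<le> A + B"
  proof (rule field_le_epsilon)
    fix e :: real assume e: "0 < e"
    have "enn2real J \<le> (A + B + 2 * (e/2)) powr p"
      using J_le[of "e/2"] e by (simp add: enn2real_leI)
    then have "enn2real J powr (1/p) \<le> ((A + B + e) powr p) powr (1/p)"
      using p by (intro powr_mono2) auto
    also have "\<dots> = A + B + e" using p AB e by (simp add: powr_powr)
    finally show "enn2real J powr (1/p) \<le> A + B + e" .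
  qed
  then show "enn2real (\<integral>\<^sup>+x. ennreal (\<bar>f x + g x\<bar> powr p) \<partial>M) powr (1/p)
      \<le> enn2real (\<integral>\<^sup>+x. ennreal (\<bar>f x\<bar> powr p) \<partial>M) powr (1/p)
       + enn2real (\<integral>\<^sup>+x. ennreal (\<bar>g x\<bar> powr p) \<partial>M) powr (1/p)"
    unfolding J_def A_def B_def .
qed

section \<open>The Morrey norm\<close>

lemma morrey_local_int_eq_indicator:
  assumes "0 < p"
  shows "morrey_local_int p f a r
    = (\<integral>\<^sup>+y. ennreal (\<bar>indicator (ball a r) y * f y\<bar> powr p) \<partial>lebesgue)"
  unfolding morrey_local_int_def using assms
  by (intro nn_integral_cong) (simp add: indicator_def)

lemma morrey_local_nonneg: "0 \<le> morrey_local p q f a r"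
  unfolding morrey_local_def by simp

lemma morrey_local_le_morrey_norm:
  assumes "in_morrey p q f" "0 < r"
  shows "morrey_local p q f a r \<le> morrey_norm p q f"
  using assms unfolding morrey_norm_def in_morrey_def by (intro cSup_upper) auto

lemma morrey_norm_nonneg: "in_morrey p q f \<Longrightarrow> 0 \<le> morrey_norm p q f"
  using morrey_local_le_morrey_norm[of p q f 1 0] morrey_local_nonneg[of p q f 0 1] by simp

lemma morrey_norm_leI:
  assumes "\<And>a r. 0 < r \<Longrightarrow> morrey_local p q f a r \<le> C"
  shows "morrey_norm p q f \<le> C"
  unfolding morrey_norm_def using assms by (intro cSup_least) (auto intro: gt_ex)

lemma morrey_local_add_le:
  fixes f g :: "'a::euclidean_space \<Rightarrow> real"
  assumes p: "1 \<le> p" and f: "in_morrey p q f" and g: "in_morrey p q g" and r: "0 < r"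
  shows "morrey_local_int p (\<lambda>t. f t + g t) a r < \<infinity>"
    and "morrey_local p q (\<lambda>t. f t + g t) a r \<le> morrey_norm p q f + morrey_norm p q g"
proof -
  let ?B = "indicator (ball a r) :: 'a \<Rightarrow> real"
  have [measurable]: "ball a r \<in> sets lebesgue" "f \<in> borel_measurable lebesgue"
      "g \<in> borel_measurable lebesgue"
    using f g by (simp_all add: in_morrey_def)
  have "morrey_local_int p f a r < \<infinity>" "morrey_local_int p g a r < \<infinity>"
    using f g r by (simp_all add: in_morrey_def)
  then have fin: "(\<integral>\<^sup>+y. ennreal (\<bar>?B y * f y\<bar> powr p) \<partial>lebesgue) < \<infinity>"
      "(\<integral>\<^sup>+y. ennreal (\<bar>?B y * g y\<bar> powr p) \<partial>lebesgue) < \<infinity>"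
    using p by (simp_all add: morrey_local_int_eq_indicator)
  note Minkowski = Minkowski_nn_integral_powr[OF p _ _ fin]
  show "morrey_local_int p (\<lambda>t. f t + g t) a r < \<infinity>"
    using Minkowski(1) p by (simp add: morrey_local_int_eq_indicator distrib_left)
  have "morrey_local p q (\<lambda>t. f t + g t) a r \<le> morrey_local p q f a r + morrey_local p q g a r"
    using Minkowski(2) p unfolding morrey_local_def
    by (simp add: morrey_local_int_eq_indicator distrib_left[symmetric] mult_left_mono)
  also have "\<dots> \<le> morrey_norm p q f + morrey_norm p q g"
    using f g r by (intro add_mono morrey_local_le_morrey_norm)
  finally show "morrey_local p q (\<lambda>t. f t + g t) a r \<le> morrey_norm p q f + morrey_norm p q g" .
qed

lemma in_morrey_add:
  "1 \<le> p \<Longrightarrow> in_morrey p q f \<Longrightarrow> in_morrey p q g \<Longrightarrow> in_morrey p q (\<lambda>t. f t + g t)"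
  using morrey_local_add_le[of p q f g] unfolding in_morrey_def[of p q "\<lambda>t. f t + g t"]
  by (auto simp: in_morrey_def intro!: bdd_aboveI)

lemma morrey_norm_add_le:
  "1 \<le> p \<Longrightarrow> in_morrey p q f \<Longrightarrow> in_morrey p q g
    \<Longrightarrow> morrey_norm p q (\<lambda>t. f t + g t) \<le> morrey_norm p q f + morrey_norm p q g"
  using morrey_local_add_le(2) by (blast intro: morrey_norm_leI)

lemma morrey_local_scale:
  fixes f :: "'a::euclidean_space \<Rightarrow> real"
  assumes p: "1 \<le> p" and [measurable]: "f \<in> borel_measurable lebesgue"
  shows "morrey_local_int p (\<lambda>t. c * f t) a r = ennreal (\<bar>c\<bar> powr p) * morrey_local_int p f a r"
    and "morrey_local p q (\<lambda>t. c * f t) a r = \<bar>c\<bar> * morrey_local p q f a r"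
proof -
  have [measurable]: "ball a r \<in> sets lebesgue" by simp
  show int: "morrey_local_int p (\<lambda>t. c * f t) a r = ennreal (\<bar>c\<bar> powr p) * morrey_local_int p f a r"
    unfolding morrey_local_int_def
    by (simp add: abs_mult powr_mult ennreal_mult nn_integral_cmult mult.assoc)
  show "morrey_local p q (\<lambda>t. c * f t) a r = \<bar>c\<bar> * morrey_local p q f a r"
    unfolding morrey_local_def int using p by (simp add: enn2real_mult powr_mult powr_powr)
qed

lemma in_morrey_scale:
  assumes "1 \<le> p" "in_morrey p q f"
  shows "in_morrey p q (\<lambda>t. c * f t)"
proof -
  have fm: "f \<in> borel_measurable lebesgue" using assms by (simp add: in_morrey_def)
  have "morrey_local p q (\<lambda>t. c * f t) a r \<le> \<bar>c\<bar> * morrey_norm p q f" if "0 < r" for a r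
    using morrey_local_le_morrey_norm[OF assms(2) that]
    by (simp add: morrey_local_scale[OF assms(1) fm] mult_left_mono)
  then show ?thesis
    using assms by (auto simp: in_morrey_def morrey_local_scale ennreal_mult_less_top
        intro!: bdd_aboveI)
qed

lemma morrey_norm_scale:
  assumes p: "1 \<le> p" and f: "in_morrey p q f"
  shows "morrey_norm p q (\<lambda>t. c * f t) = \<bar>c\<bar> * morrey_norm p q f"
proof (rule antisym)
  have fm: "f \<in> borel_measurable lebesgue" using f by (simp add: in_morrey_def)
  show "morrey_norm p q (\<lambda>t. c * f t) \<le> \<bar>c\<bar> * morrey_norm p q f"
    using f by (auto simp: morrey_local_scale[OF p fm]
        intro!: morrey_norm_leI mult_left_mono morrey_local_le_morrey_norm)
  show "\<bar>c\<bar> * morrey_norm p q f \<le> morrey_norm p q (\<lambda>t. c * f t)"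
  proof (cases "c = 0")
    case True
    then show ?thesis using morrey_norm_nonneg[OF in_morrey_scale[OF p f, of c]] by simp
  next
    case False
    have "morrey_norm p q f \<le> morrey_norm p q (\<lambda>t. c * f t) / \<bar>c\<bar>"
      using False morrey_local_le_morrey_norm[OF in_morrey_scale[OF p f]]
      by (intro morrey_norm_leI) (simp add: morrey_local_scale[OF p fm] field_simps)
    then show ?thesis using False by (simp add: field_simps)
  qed
qed

lemma in_morrey_lincomb:
  "1 \<le> p \<Longrightarrow> in_morrey p q f \<Longrightarrow> in_morrey p q g \<Longrightarrow> in_morrey p q (\<lambda>t. c * f t + d * g t)"
  by (intro in_morrey_add in_morrey_scale)

lemma morrey_norm_lincomb_le:
  assumes "1 \<le> p" "in_morrey p q f" "in_morrey p q g"
  shows "morrey_norm p q (\<lambda>t. c * f t + d * g t) \<le> \<bar>c\<bar> * morrey_norm p q f + \<bar>d\<bar> * morrey_norm p q g"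
  using morrey_norm_add_le[OF assms(1) in_morrey_scale[OF assms(1,2)] in_morrey_scale[OF assms(1,3)]]
  by (simp add: morrey_norm_scale assms)

lemma morrey_norm_diff_le:
  assumes "1 \<le> p" "in_morrey p q f" "in_morrey p q g"
  shows "morrey_norm p q (\<lambda>t. f t - g t) \<le> morrey_norm p q f + morrey_norm p q g"
  using morrey_norm_lincomb_le[OF assms, of 1 "-1"] by simp

section \<open>Upper bounds for the geometric constants\<close>

lemma morrey_NJ_quotient_le_two:
  assumes p: "1 \<le> p" and f: "in_morrey p q f" and g: "in_morrey p q g"
    and nz: "morrey_norm p q f \<noteq> 0"
  shows "((morrey_norm p q (\<lambda>t. f t + g t))\<^sup>2 + (morrey_norm p q (\<lambda>t. f t - g t))\<^sup>2)
       / (2 * ((morrey_norm p q f)\<^sup>2 + (morrey_norm p q g)\<^sup>2)) \<le> 2"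
proof -
  define A B where "A = morrey_norm p q f" and "B = morrey_norm p q g"
  have "(morrey_norm p q (\<lambda>t. f t + g t))\<^sup>2 \<le> (A + B)\<^sup>2"
    "(morrey_norm p q (\<lambda>t. f t - g t))\<^sup>2 \<le> (A + B)\<^sup>2"
    unfolding A_def B_def using p f g
    by (auto intro!: power_mono morrey_norm_add_le morrey_norm_diff_le morrey_norm_nonneg
        in_morrey_add in_morrey_lincomb[of p q f g 1 "-1", simplified])
  moreover have "(A + B)\<^sup>2 \<le> 2 * (A\<^sup>2 + B\<^sup>2)"
    using sum_squares_ge_zero[of "A - B" 0] by (simp add: power2_eq_square algebra_simps)
  moreover have "0 < A\<^sup>2 + B\<^sup>2" using nz unfolding A_def by (simp add: add_pos_nonneg)
  ultimately show ?thesis unfolding A_def[symmetric] B_def[symmetric] by (simp add: divide_le_eq)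
qed

lemma morrey_J_quotient_le_two:
  assumes "1 \<le> p" "in_morrey p q f" "in_morrey p q g" "morrey_norm p q f = 1" "morrey_norm p q g = 1"
  shows "min (morrey_norm p q (\<lambda>t. f t + g t)) (morrey_norm p q (\<lambda>t. f t - g t)) \<le> 2"
  using morrey_norm_add_le[OF assms(1-3)] assms(4,5) by (simp add: min.coboundedI1)

lemma morrey_norm_normalized_diff_le:
  assumes p: "1 \<le> p" and f: "in_morrey p q f" and g: "in_morrey p q g"
    and A: "0 < morrey_norm p q f" and B: "0 < morrey_norm p q g"
  shows "morrey_norm p q (\<lambda>t. f t / morrey_norm p q f - g t / morrey_norm p q g)
    \<le> 2 * morrey_norm p q (\<lambda>t. f t - g t) / max (morrey_norm p q f) (morrey_norm p q g)"
proof -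
  define A B E where "A = morrey_norm p q f" and "B = morrey_norm p q g"
    and "E = morrey_norm p q (\<lambda>t. f t - g t)"
  have pos: "0 < A" "0 < B" using A B by (simp_all add: A_def B_def)
  have fg: "in_morrey p q (\<lambda>t. f t - g t)" using in_morrey_lincomb[OF p f g, of 1 "-1"] by simp
  have "A \<le> E + B" "B \<le> E + A"
    using morrey_norm_lincomb_le[OF p fg g, of 1 1] morrey_norm_lincomb_le[OF p f fg, of 1 "-1"]
    by (simp_all add: A_def B_def E_def)
  \<comment> \<open>write the difference of unit vectors through \<open>f - g\<close> and the longer of \<open>f\<close>, \<open>g\<close>\<close>
  show ?thesis
  proof (cases "B \<le> A")
    case True
    have "(\<lambda>t. f t / A - g t / B) = (\<lambda>t. (1/A) * (f t - g t) + (1/A - 1/B) * g t)"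
      using A B by (auto simp: A_def B_def field_simps)
    then have "morrey_norm p q (\<lambda>t. f t / A - g t / B) \<le> E / A + (1/B - 1/A) * B"
      using morrey_norm_lincomb_le[OF p fg g, of "1/A" "1/A - 1/B"] True A B
      by (simp add: A_def B_def E_def divide_left_mono)
    also have "\<dots> = (E + A - B) / A" using pos by (simp add: field_simps)
    also have "\<dots> \<le> 2 * E / A" using \<open>A \<le> E + B\<close> pos by (intro divide_right_mono) auto
    finally show ?thesis using True by (simp add: A_def B_def E_def max_def)
  next
    case False
    have "(\<lambda>t. f t / A - g t / B) = (\<lambda>t. (1/A - 1/B) * f t + (1/B) * (f t - g t))"
      using A B by (auto simp: A_def B_def field_simps)
    then have "morrey_norm p q (\<lambda>t. f t / A - g t / B) \<le> (1/A - 1/B) * A + E / B"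
      using morrey_norm_lincomb_le[OF p f fg, of "1/A - 1/B" "1/B"] False A B
      by (simp add: A_def B_def E_def divide_left_mono)
    also have "\<dots> = (E + B - A) / B" using pos by (simp add: field_simps)
    also have "\<dots> \<le> 2 * E / B" using \<open>B \<le> E + A\<close> pos by (intro divide_right_mono) auto
    finally show ?thesis using False by (simp add: A_def B_def E_def max_def)
  qed
qed

lemma morrey_DW_quotient_le_four:
  assumes p: "1 \<le> p" and f: "in_morrey p q f" and g: "in_morrey p q g"
    and nz: "morrey_norm p q f \<noteq> 0" "morrey_norm p q g \<noteq> 0" "morrey_norm p q (\<lambda>t. f t - g t) \<noteq> 0"
  shows "(morrey_norm p q f + morrey_norm p q g) / morrey_norm p q (\<lambda>t. f t - g t)
       * morrey_norm p q (\<lambda>t. f t / morrey_norm p q f - g t / morrey_norm p q g) \<le> 4"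
proof -
  define A B E where "A = morrey_norm p q f" and "B = morrey_norm p q g"
    and "E = morrey_norm p q (\<lambda>t. f t - g t)"
  have pos: "0 < A" "0 < B" "0 < E"
    using nz morrey_norm_nonneg[OF f] morrey_norm_nonneg[OF g]
      morrey_norm_nonneg[OF in_morrey_lincomb[OF p f g, of 1 "-1"]]
    by (auto simp: A_def B_def E_def)
  have "(A + B) / E * morrey_norm p q (\<lambda>t. f t / A - g t / B) \<le> (A + B) / E * (2 * E / max A B)"
    using morrey_norm_normalized_diff_le[OF p f g] pos
    by (intro mult_left_mono) (auto simp: A_def B_def E_def)
  also have "\<dots> \<le> 4" using pos by (simp add: field_simps max_def)
  finally show ?thesis by (simp add: A_def B_def E_def)
qed

section \<open>Two far-apart bumps\<close>

lemma morrey_factor_le_large_ball: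
  fixes p q m w s c :: real
  assumes pq: "1 \<le> p" "p < q" and pos: "0 < w" "0 < c" and s: "0 \<le> s" "s \<le> c * w"
    and m: "c powr (q / (q - p)) * w \<le> m"
  shows "m powr (1/q - 1/p) * s powr (1/p) \<le> w powr (1/q)"
proof -
  have e: "1/q - 1/p \<le> 0" using pq by (simp add: field_simps)
  have exp: "q / (q - p) * (1/q - 1/p) = - (1/p)" using pq by (simp add: field_simps)
  have "m powr (1/q - 1/p) \<le> (c powr (q / (q - p)) * w) powr (1/q - 1/p)"
    using m pos e by (intro powr_mono2') auto
  also have "\<dots> = (c powr (q / (q - p))) powr (1/q - 1/p) * w powr (1/q - 1/p)"
    using pos by (simp add: powr_mult)
  also have "(c powr (q / (q - p))) powr (1/q - 1/p) = c powr (- (1/p))"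
    unfolding powr_powr exp ..
  finally have "m powr (1/q - 1/p) * s powr (1/p)
      \<le> c powr (- (1/p)) * w powr (1/q - 1/p) * (c * w) powr (1/p)"
    using s pq by (intro mult_mono powr_mono2) auto
  also have "\<dots> = w powr (1/q)"
    using pos by (simp add: powr_mult powr_minus field_simps flip: powr_add)
  finally show ?thesis .
qed

lemma morrey_factor_le:
  fixes p q m w s :: real
  assumes pq: "1 \<le> p" "p < q" and pos: "0 < m" "0 < w" and s: "0 \<le> s" "s \<le> m" "s \<le> w"
  shows "m powr (1/q - 1/p) * s powr (1/p) \<le> w powr (1/q)"
proof (cases "m \<le> w")
  case True
  have "m powr (1/q - 1/p) * s powr (1/p) \<le> m powr (1/q - 1/p) * m powr (1/p)"
    using s pq by (intro mult_left_mono powr_mono2) auto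
  also have "\<dots> = m powr (1/q)" using pos by (simp flip: powr_add)
  also have "\<dots> \<le> w powr (1/q)" using True pos pq by (intro powr_mono2) auto
  finally show ?thesis .
next
  case False
  then show ?thesis using morrey_factor_le_large_ball[OF pq, of w 1 s m] pos s by simp
qed

lemma morrey_local_int_two_steps:
  fixes S T :: "'a::euclidean_space set"
  assumes p: "0 < p" and S: "S \<in> lmeasurable" and T: "T \<in> lmeasurable" and disj: "S \<inter> T = {}"
  shows "morrey_local_int p (\<lambda>t. \<alpha> * indicator S t + \<beta> * indicator T t) a r
    = ennreal (\<bar>\<alpha>\<bar> powr p * measure lebesgue (ball a r \<inter> S)
             + \<bar>\<beta>\<bar> powr p * measure lebesgue (ball a r \<inter> T))"
proof -
  have BS: "ball a r \<inter> S \<in> lmeasurable" and BT: "ball a r \<inter> T \<in> lmeasurable"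
    using S T by (auto intro: fmeasurable_Int_fmeasurable)
  have "morrey_local_int p (\<lambda>t. \<alpha> * indicator S t + \<beta> * indicator T t) a r
      = (\<integral>\<^sup>+y. ennreal (\<bar>\<alpha>\<bar> powr p) * indicator (ball a r \<inter> S) y
               + ennreal (\<bar>\<beta>\<bar> powr p) * indicator (ball a r \<inter> T) y \<partial>lebesgue)"
    unfolding morrey_local_int_def
    using disj p by (intro nn_integral_cong) (auto simp: indicator_def)
  also have "\<dots> = ennreal (\<bar>\<alpha>\<bar> powr p) * emeasure lebesgue (ball a r \<inter> S)
               + ennreal (\<bar>\<beta>\<bar> powr p) * emeasure lebesgue (ball a r \<inter> T)"
    using BS BT by (simp add: nn_integral_add nn_integral_cmult_indicator)
  also have "\<dots> = ennreal (\<bar>\<alpha>\<bar> powr p * measure lebesgue (ball a r \<inter> S)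
             + \<bar>\<beta>\<bar> powr p * measure lebesgue (ball a r \<inter> T))"
    using BS BT by (simp add: emeasure_eq_measure2 ennreal_mult)
  finally show ?thesis .
qed

lemma morrey_local_two_steps_le:
  fixes S T :: "'a::euclidean_space set"
  assumes p: "0 < p" and S: "S \<in> lmeasurable" and T: "T \<in> lmeasurable" and disj: "S \<inter> T = {}"
  shows "morrey_local p q (\<lambda>t. \<alpha> * indicator S t + \<beta> * indicator T t) a r
    \<le> max \<bar>\<alpha>\<bar> \<bar>\<beta>\<bar> * (measure lebesgue (ball a r) powr (1/q - 1/p)
        * (measure lebesgue (ball a r \<inter> S) + measure lebesgue (ball a r \<inter> T)) powr (1/p))"
proof -
  define M \<mu>S \<mu>T where "M = max \<bar>\<alpha>\<bar> \<bar>\<beta>\<bar>"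
    and "\<mu>S = measure lebesgue (ball a r \<inter> S)" and "\<mu>T = measure lebesgue (ball a r \<inter> T)"
  have \<mu>: "0 \<le> \<mu>S" "0 \<le> \<mu>T" by (simp_all add: \<mu>S_def \<mu>T_def)
  have "\<bar>\<alpha>\<bar> powr p * \<mu>S + \<bar>\<beta>\<bar> powr p * \<mu>T \<le> M powr p * (\<mu>S + \<mu>T)"
    using \<mu> p unfolding M_def distrib_left
    by (intro add_mono mult_right_mono powr_mono2) auto
  then have "(\<bar>\<alpha>\<bar> powr p * \<mu>S + \<bar>\<beta>\<bar> powr p * \<mu>T) powr (1/p) \<le> (M powr p * (\<mu>S + \<mu>T)) powr (1/p)"
    using \<mu> p by (intro powr_mono2) auto
  also have "\<dots> = M * (\<mu>S + \<mu>T) powr (1/p)"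
    using \<mu> p by (simp add: M_def powr_mult powr_powr)
  finally show ?thesis
    unfolding morrey_local_def morrey_local_int_two_steps[OF assms] \<mu>S_def[symmetric] \<mu>T_def[symmetric]
      M_def[symmetric]
    using \<mu> by (simp add: mult_left_mono mult.left_commute[of M] del: ennreal_plus)
qed

lemma dist_lt_if_ball_meets_balls:
  assumes "ball a r \<inter> ball x s \<noteq> {}" "ball a r \<inter> ball y t \<noteq> {}"
  shows "dist x y < s + 2 * r + t"
proof -
  obtain u v where "u \<in> ball a r" "u \<in> ball x s" "v \<in> ball a r" "v \<in> ball y t"
    using assms by blast
  then have "dist x u < s" "dist u a < r" "dist a v < r" "dist v y < t"
    by (auto simp: dist_commute)
  then show ?thesis using dist_triangle[of x y u] dist_triangle[of u y a] dist_triangle[of a y v]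
    by linarith
qed

lemma morrey_local_at_bump:
  fixes c :: "'a::euclidean_space"
  assumes p: "0 < p" and T: "T \<in> lmeasurable" and disj: "ball c 1 \<inter> T = {}"
  shows "morrey_local p q (\<lambda>t. \<gamma> * indicator (ball c 1) t + \<delta> * indicator T t) c 1
    = \<bar>\<gamma>\<bar> * unit_ball_vol DIM('a) powr (1/q)"
proof -
  define w where "w = unit_ball_vol DIM('a)"
  have w: "0 < w" "measure lebesgue (ball c 1) = w" by (simp_all add: w_def content_ball)
  have "morrey_local p q (\<lambda>t. \<gamma> * indicator (ball c 1) t + \<delta> * indicator T t) c 1
      = w powr (1/q - 1/p) * (\<bar>\<gamma>\<bar> powr p * w) powr (1/p)"
    unfolding morrey_local_def using p T disj w
    by (simp add: morrey_local_int_two_steps Int_absorb)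
  also have "\<dots> = \<bar>\<gamma>\<bar> * w powr (1/q)"
    using p w by (simp add: powr_mult powr_powr flip: powr_add)
  finally show ?thesis by (simp add: w_def)
qed

lemma measure_ball_Int_ball_le:
  fixes a c :: "'a::euclidean_space"
  shows "measure lebesgue (ball a r \<inter> ball c 1) \<le> measure lebesgue (ball a r)"
    and "measure lebesgue (ball a r \<inter> ball c 1) \<le> unit_ball_vol DIM('a)"
proof -
  show "measure lebesgue (ball a r \<inter> ball c 1) \<le> measure lebesgue (ball a r)"
    by (rule measure_mono_fmeasurable) auto
  have "measure lebesgue (ball a r \<inter> ball c 1) \<le> measure lebesgue (ball c 1)"
    by (rule measure_mono_fmeasurable) auto
  then show "measure lebesgue (ball a r \<inter> ball c 1) \<le> unit_ball_vol DIM('a)"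
    by (simp add: content_ball)
qed

lemma morrey_factor_two_balls_le:
  fixes z a :: "'a::euclidean_space"
  assumes pq: "1 \<le> p" "p < q" and far: "2 * 2 powr (q / (q - p)) + 2 \<le> norm z" and r: "0 < r"
  shows "measure lebesgue (ball a r) powr (1/q - 1/p)
      * (measure lebesgue (ball a r \<inter> ball 0 1) + measure lebesgue (ball a r \<inter> ball z 1)) powr (1/p)
    \<le> unit_ball_vol DIM('a) powr (1/q)"
proof -
  define w m \<mu>S \<mu>T where "w = unit_ball_vol DIM('a)" and "m = measure lebesgue (ball a r)"
    and "\<mu>S = measure lebesgue (ball a r \<inter> ball 0 1)"
    and "\<mu>T = measure lebesgue (ball a r \<inter> ball z 1)"
  define K where "K = 2 powr (q / (q - p))"
  have K: "1 \<le> K" using pq by (simp add: K_def ge_one_powr_ge_zero)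
  have w: "0 < w" by (simp add: w_def)
  have m_eq: "m = w * r ^ DIM('a)" using r by (simp add: m_def w_def content_ball)
  have m: "0 < m" using r w by (simp add: m_eq)
  note part = measure_ball_Int_ball_le[of a r, folded w_def m_def]
  consider "ball a r \<inter> ball z 1 = {}" | "ball a r \<inter> ball 0 1 = {}"
    | "ball a r \<inter> ball 0 1 \<noteq> {}" "ball a r \<inter> ball z 1 \<noteq> {}" by blast
  then have "m powr (1/q - 1/p) * (\<mu>S + \<mu>T) powr (1/p) \<le> w powr (1/q)"
  proof cases
    case 1
    then show ?thesis using morrey_factor_le[OF pq m w, of \<mu>S] part[of 0] by (simp add: \<mu>S_def \<mu>T_def)
  next
    case 2
    then show ?thesis using morrey_factor_le[OF pq m w, of \<mu>T] part[of z] by (simp add: \<mu>S_def \<mu>T_def)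
  next
    case 3
    \<comment> \<open>a ball seeing both bumps is so large that the factor \<open>m powr (1/q - 1/p)\<close> absorbs the doubled mass\<close>
    have "K < r" using dist_lt_if_ball_meets_balls[OF 3] far by (simp add: K_def)
    then have "K * w \<le> m"
      using K r w power_increasing[of 1 "DIM('a)" r] by (simp add: m_eq mult_mono)
    moreover have "\<mu>S + \<mu>T \<le> 2 * w" using part[of 0] part[of z] by (simp add: \<mu>S_def \<mu>T_def)
    ultimately show ?thesis
      using morrey_factor_le_large_ball[OF pq w, of 2 "\<mu>S + \<mu>T" m] by (simp add: K_def \<mu>S_def \<mu>T_def)
  qed
  then show ?thesis by (simp add: w_def m_def \<mu>S_def \<mu>T_def)
qed

lemma morrey_two_bumps:
  fixes z :: "'a::euclidean_space" and \<alpha> \<beta> :: real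
  assumes pq: "1 \<le> p" "p < q" and far: "2 * 2 powr (q / (q - p)) + 2 \<le> norm z"
  defines "h \<equiv> \<lambda>t. \<alpha> * indicator (ball 0 1) t + \<beta> * indicator (ball z 1) t"
  shows "in_morrey p q h"
    and "morrey_norm p q h = max \<bar>\<alpha>\<bar> \<bar>\<beta>\<bar> * unit_ball_vol DIM('a) powr (1/q)"
proof -
  define w where "w = unit_ball_vol DIM('a)"
  have p: "0 < p" using pq by simp
  have disj: "ball 0 1 \<inter> ball z 1 = {}"
  proof (intro equals0I)
    fix u assume "u \<in> ball 0 1 \<inter> ball z 1"
    then have "dist 0 u < 1" "dist u z < 1" by (auto simp: dist_commute)
    moreover have "1 \<le> 2 powr (q / (q - p))" using pq by (simp add: ge_one_powr_ge_zero)
    ultimately show False using dist_triangle[of 0 z u] far by simp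
  qed
  have upper: "morrey_local p q h a r \<le> max \<bar>\<alpha>\<bar> \<bar>\<beta>\<bar> * w powr (1/q)" if "0 < r" for a r
  proof -
    have "0 \<le> max \<bar>\<alpha>\<bar> \<bar>\<beta>\<bar>" by simp
    from mult_left_mono[OF morrey_factor_two_balls_le[OF pq far that, of a] this]
    show ?thesis
      using morrey_local_two_steps_le[OF p lmeasurable_ball lmeasurable_ball disj, of q \<alpha> \<beta> a r]
      unfolding h_def w_def by linarith
  qed
  have [measurable]: "ball (0::'a) 1 \<in> sets lebesgue" "ball z 1 \<in> sets lebesgue" by simp_all
  have "h \<in> borel_measurable lebesgue" unfolding h_def by measurable
  then show "in_morrey p q h"
    unfolding in_morrey_def h_def
    using upper morrey_local_int_two_steps[OF p lmeasurable_ball lmeasurable_ball disj]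
    by (auto simp: h_def intro!: bdd_aboveI)
  have "morrey_local p q h 0 1 = \<bar>\<alpha>\<bar> * w powr (1/q)"
    unfolding h_def w_def by (rule morrey_local_at_bump[OF p lmeasurable_ball disj])
  moreover have "h = (\<lambda>t. \<beta> * indicator (ball z 1) t + \<alpha> * indicator (ball 0 1) t)"
    by (auto simp: h_def)
  then have "morrey_local p q h z 1 = \<bar>\<beta>\<bar> * w powr (1/q)"
    unfolding w_def using disj by (auto intro: morrey_local_at_bump[OF p lmeasurable_ball])
  moreover have "max \<bar>\<alpha>\<bar> \<bar>\<beta>\<bar> = \<bar>\<alpha>\<bar> \<or> max \<bar>\<alpha>\<bar> \<bar>\<beta>\<bar> = \<bar>\<beta>\<bar>" by (simp add: max_def)
  ultimately have "\<exists>a r. max \<bar>\<alpha>\<bar> \<bar>\<beta>\<bar> * w powr (1/q) = morrey_local p q h a r \<and> 0 < r"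
    using zero_less_one by metis
  then have "max \<bar>\<alpha>\<bar> \<bar>\<beta>\<bar> * w powr (1/q) \<in> {morrey_local p q h a r | a r. 0 < r}"
    by blast
  then show "morrey_norm p q h = max \<bar>\<alpha>\<bar> \<bar>\<beta>\<bar> * unit_ball_vol DIM('a) powr (1/q)"
    unfolding morrey_norm_def w_def[symmetric] using upper by (intro cSup_eq_maximum) auto
qed

section \<open>The geometric constants\<close>

definition isometric_linfty_pair :: "real \<Rightarrow> real \<Rightarrow> ('a::euclidean_space \<Rightarrow> real) \<Rightarrow> ('a \<Rightarrow> real) \<Rightarrow> bool" where
  "isometric_linfty_pair p q u v \<longleftrightarrow> (\<forall>\<alpha> \<beta>. in_morrey p q (\<lambda>t. \<alpha> * u t + \<beta> * v t)
     \<and> morrey_norm p q (\<lambda>t. \<alpha> * u t + \<beta> * v t) = max \<bar>\<alpha>\<bar> \<bar>\<beta>\<bar>)"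

lemma exists_isometric_linfty_pair:
  assumes pq: "1 \<le> p" "p < q"
  shows "\<exists>u v :: 'a::euclidean_space \<Rightarrow> real. isometric_linfty_pair p q u v"
proof -
  obtain e :: 'a where e: "e \<in> Basis" using nonempty_Basis by blast
  define z where "z = (2 * 2 powr (q / (q - p)) + 2) *\<^sub>R e"
  have far: "2 * 2 powr (q / (q - p)) + 2 \<le> norm z"
    using e by (simp add: z_def)
  define c where "c = unit_ball_vol DIM('a) powr (1/q)"
  have vol: "0 < unit_ball_vol DIM('a)" by simp
  then have c: "0 < c" unfolding c_def powr_gt_zero by linarith
  define u v where "u t = indicator (ball 0 1) t / c" and "v t = indicator (ball z 1) t / c" for t
  have "isometric_linfty_pair p q u v"
    unfolding isometric_linfty_pair_def
  proof (intro allI conjI)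
    fix \<alpha> \<beta> :: real
    have eq: "(\<lambda>t. \<alpha> * u t + \<beta> * v t)
        = (\<lambda>t. (\<alpha> / c) * indicator (ball 0 1) t + (\<beta> / c) * indicator (ball z 1) t)"
      by (simp add: u_def v_def)
    show "in_morrey p q (\<lambda>t. \<alpha> * u t + \<beta> * v t)"
      unfolding eq by (rule morrey_two_bumps(1)[OF pq far])
    show "morrey_norm p q (\<lambda>t. \<alpha> * u t + \<beta> * v t) = max \<bar>\<alpha>\<bar> \<bar>\<beta>\<bar>"
      unfolding eq morrey_two_bumps(2)[OF pq far] c_def[symmetric]
      using c by (simp add: abs_div max_def divide_le_cancel)
  qed
  then show ?thesis by blast
qed

lemma morrey_C_NJ_eq_two:
  fixes u v :: "'a::euclidean_space \<Rightarrow> real"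
  assumes p: "1 \<le> p" and uv: "isometric_linfty_pair p q u v"
  shows "morrey_C_NJ p q TYPE('a \<Rightarrow> real) = 2"
  unfolding morrey_C_NJ_def
proof (rule cSup_eq_maximum)
  define L where "L a b = (\<lambda>t. a * u t + b * v t)" for a b
  have L: "in_morrey p q (L a b)" "morrey_norm p q (L a b) = max \<bar>a\<bar> \<bar>b\<bar>" for a b
    using uv by (simp_all add: isometric_linfty_pair_def L_def)
  have "(\<lambda>t. L 1 1 t + L 1 (-1) t) = L 2 0" "(\<lambda>t. L 1 1 t - L 1 (-1) t) = L 0 2"
    by (auto simp: L_def)
  then show "2 \<in> {((morrey_norm p q (\<lambda>t. f t + g t))\<^sup>2 + (morrey_norm p q (\<lambda>t. f t - g t))\<^sup>2)
       / (2 * ((morrey_norm p q f)\<^sup>2 + (morrey_norm p q g)\<^sup>2))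
     | f g :: 'a \<Rightarrow> real. in_morrey p q f \<and> in_morrey p q g
         \<and> morrey_norm p q f \<noteq> 0 \<and> morrey_norm p q g \<noteq> 0}"
    using L by (intro CollectI exI[of _ "L 1 1"] exI[of _ "L 1 (-1)"]) simp
qed (use morrey_NJ_quotient_le_two[OF p] in auto)

lemma morrey_C_J_eq_two:
  fixes u v :: "'a::euclidean_space \<Rightarrow> real"
  assumes p: "1 \<le> p" and uv: "isometric_linfty_pair p q u v"
  shows "morrey_C_J p q TYPE('a \<Rightarrow> real) = 2"
  unfolding morrey_C_J_def
proof (rule cSup_eq_maximum)
  define L where "L a b = (\<lambda>t. a * u t + b * v t)" for a b
  have L: "in_morrey p q (L a b)" "morrey_norm p q (L a b) = max \<bar>a\<bar> \<bar>b\<bar>" for a b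
    using uv by (simp_all add: isometric_linfty_pair_def L_def)
  have "(\<lambda>t. L 1 1 t + L 1 (-1) t) = L 2 0" "(\<lambda>t. L 1 1 t - L 1 (-1) t) = L 0 2"
    by (auto simp: L_def)
  then show "2 \<in> {min (morrey_norm p q (\<lambda>t. f t + g t)) (morrey_norm p q (\<lambda>t. f t - g t))
     | f g :: 'a \<Rightarrow> real. in_morrey p q f \<and> in_morrey p q g
         \<and> morrey_norm p q f = 1 \<and> morrey_norm p q g = 1}"
    using L by (intro CollectI exI[of _ "L 1 1"] exI[of _ "L 1 (-1)"]) simp
qed (use morrey_J_quotient_le_two[OF p] in auto)

lemma morrey_C_DW_eq_four:
  fixes u v :: "'a::euclidean_space \<Rightarrow> real"
  assumes p: "1 \<le> p" and uv: "isometric_linfty_pair p q u v"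
  shows "morrey_C_DW p q TYPE('a \<Rightarrow> real) = 4"
proof -
  define S where "S = {(morrey_norm p q f + morrey_norm p q g) / morrey_norm p q (\<lambda>t. f t - g t)
       * morrey_norm p q (\<lambda>t. f t / morrey_norm p q f - g t / morrey_norm p q g)
     | f g :: 'a \<Rightarrow> real. in_morrey p q f \<and> in_morrey p q g
         \<and> morrey_norm p q f \<noteq> 0 \<and> morrey_norm p q g \<noteq> 0
         \<and> morrey_norm p q (\<lambda>t. f t - g t) \<noteq> 0}"
  define L where "L a b = (\<lambda>t. a * u t + b * v t)" for a b
  have L: "in_morrey p q (L a b)" "morrey_norm p q (L a b) = max \<bar>a\<bar> \<bar>b\<bar>" for a b
    using uv by (simp_all add: isometric_linfty_pair_def L_def)
  have in_S: "2 * (1 + s) \<in> S" if s: "0 < s" "s < 1" for s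
  proof -
    have norms: "morrey_norm p q (L 1 (2 * s - 1)) = 1" "morrey_norm p q (L s s) = s"
      using s by (simp_all add: L max_def)
    have "(\<lambda>t. L 1 (2 * s - 1) t - L s s t) = L (1 - s) (s - 1)"
      "(\<lambda>t. L 1 (2 * s - 1) t / 1 - L s s t / s) = L 0 (2 * s - 2)"
      using s by (auto simp: L_def field_simps)
    moreover have "(1 + s) / max \<bar>1 - s\<bar> \<bar>s - 1\<bar> * max \<bar>0\<bar> \<bar>2 * s - 2\<bar> = 2 * (1 + s)"
      using s by (simp add: max_def field_simps)
    ultimately show ?thesis
      unfolding S_def using s L norms
      by (intro CollectI exI[of _ "L 1 (2 * s - 1)"] exI[of _ "L s s"]) simp
  qed
  have le4: "x \<le> 4" if "x \<in> S" for x
    using that morrey_DW_quotient_le_four[OF p] unfolding S_def by auto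
  have "Sup S = 4"
  proof (rule cSup_eq_non_empty)
    show "S \<noteq> {}" using in_S[of "1/2"] by auto
  next
    fix y assume y: "\<And>x. x \<in> S \<Longrightarrow> x \<le> y"
    \<comment> \<open>if \<open>3 \<le> y < 4\<close>, the witness \<open>s = y/4\<close> would give \<open>2 + y/2 \<le> y\<close>\<close>
    show "4 \<le> y"
    proof (rule ccontr)
      assume "\<not> 4 \<le> y"
      moreover have "3 \<le> y" using y[OF in_S[of "1/2"]] by simp
      ultimately show False using y[OF in_S[of "y/4"]] by simp
    qed
  qed (rule le4)
  then show ?thesis by (simp add: morrey_C_DW_def S_def)
qed

theorem theorem1:
  fixes p q :: real
  assumes "1 \<le> p" and "p < q"
  shows "morrey_C_NJ p q TYPE('a::euclidean_space \<Rightarrow> real) = 2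
       \<and> morrey_C_J p q TYPE('a \<Rightarrow> real) = 2
       \<and> morrey_C_DW p q TYPE('a \<Rightarrow> real) = 4"
proof -
  obtain u v :: "'a \<Rightarrow> real" where uv: "isometric_linfty_pair p q u v"
    using exists_isometric_linfty_pair[OF assms] by blast
  show ?thesis
    using morrey_C_NJ_eq_two[OF assms(1) uv] morrey_C_J_eq_two[OF assms(1) uv]
      morrey_C_DW_eq_four[OF assms(1) uv] by blast
qed

end
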